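(* For any refund schemes $(R_j)_{j\in P}$ satisfying Contribution Monotonicity, there exist instances of the combinatorial civic crowdfunding game $\mathcal{M}_{CC}$ and contributions of the agents in $N\setminus\{i'\}$ such that agent $i'$ has no optimal strategy, i.e., the supremum of agent $i'$'s total utility over its feasible contribution vectors (given the others' contributions) is not attained.
   Context: Combinatorial civic crowdfunding game $\mathcal{M}_{CC}$: projects $P=\{1,\dots,p\}$ with target costs $T_j>0$; agents $N=\{1,\dots,n\}$ with budgets $\gamma_i\ge0$ and valuations $\theta_{ij}\ge0$. Agent $i$ contributes $x_{ij}\in\mathbb{R}_+$ with $\sum_j x_{ij}\le\gamma_i$; $C_j=\sum_i x_{ij}$; project $j$ funded iff $C_j\ge T_j$. Anonymous refund scheme $R_j(B_j,x_{ij},C_j)\ge0$ with bonus $B_j>0$ gives refund $r_{ij}$, with $\sum_i r_{ij}=B_j$. Utility of $i$ from $j$: $\theta_{ij}-x_{ij}$ if $C_j\ge T_j$, $r_{ij}$ if $C_j<T_j$; total utility is the sum over projects. Contribution Monotonicity: $R_j$ differentiable and strictly increasing in the contribution. *)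

theory Defs
  imports "HOL-Analysis.Analysis"
begin

text \<open>Refund schemes are given as a family R indexed by projects j (1-based);
  R j B x C is the refund of an agent contributing x to project j when the
  bonus is B and the total contribution is C.\<close>

type_synonym refund_schemes = "nat \<Rightarrow> real \<Rightarrow> real \<Rightarrow> real \<Rightarrow> real"

definition refund_scheme :: "refund_schemes \<Rightarrow> bool" where
  "refund_scheme R \<longleftrightarrow>
     (\<forall>j B x C. B > 0 \<longrightarrow> 0 \<le> x \<longrightarrow> x \<le> C \<longrightarrow> 0 \<le> R j B x C) \<and>
     (\<forall>j B (A::nat set) f. B > 0 \<longrightarrow> finite A \<longrightarrow> (\<forall>i\<in>A. 0 \<le> f i) \<longrightarrow>
        sum f A > 0 \<longrightarrow> (\<Sum>i\<in>A. R j B (f i) (sum f A)) = B)"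

text \<open>Contribution Monotonicity: an agent's refund is differentiable and strictly
  increasing in its own contribution x (the others' total c > 0 being fixed,
  so that the total contribution is c + x).\<close>
definition contribution_monotone :: "refund_schemes \<Rightarrow> bool" where
  "contribution_monotone R \<longleftrightarrow>
     (\<forall>j B c. B > 0 \<longrightarrow> c > 0 \<longrightarrow>
        strict_mono_on {0..} (\<lambda>x. R j B x (c + x)) \<and>
        (\<forall>x\<ge>0. (\<lambda>y. R j B y (c + y)) differentiable (at x within {0..})))"

definition total_contrib :: "nat \<Rightarrow> (nat \<Rightarrow> nat \<Rightarrow> real) \<Rightarrow> nat \<Rightarrow> real" where
  "total_contrib n x j = (\<Sum>k\<in>{1..n}. x k j)"

definition agent_utility ::
  "refund_schemes \<Rightarrow> (nat \<Rightarrow> real) \<Rightarrow> (nat \<Rightarrow> real) \<Rightarrow> (nat \<Rightarrow> nat \<Rightarrow> real)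
   \<Rightarrow> nat \<Rightarrow> nat \<Rightarrow> (nat \<Rightarrow> nat \<Rightarrow> real) \<Rightarrow> nat \<Rightarrow> real" where
  "agent_utility R B T \<theta> n p x i =
     (\<Sum>j\<in>{1..p}. if total_contrib n x j \<ge> T j then \<theta> i j - x i j
                   else R j (B j) (x i j) (total_contrib n x j))"

definition feasible_strategy :: "nat \<Rightarrow> real \<Rightarrow> (nat \<Rightarrow> real) \<Rightarrow> bool" where
  "feasible_strategy p g y \<longleftrightarrow> (\<forall>j\<in>{1..p}. 0 \<le> y j) \<and> (\<Sum>j\<in>{1..p}. y j) \<le> g"

end

theory Submission
  imports Defs
begin

text \<open>An agent whose refund is strictly increasing in its own contribution wants to
  contribute as much as possible while keeping the project unfunded, i.e. strictly
  less than the gap between the target and the others' contributions; contributing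
  the whole gap funds the project and forfeits the refund. So the utility
  increases towards the gap but drops at it, and its supremum is not attained.
  A single project with target 2, one other agent contributing 1 and zero
  valuations realises this.\<close>

lemma threshold_utility_sup_not_attained:
  fixes r h :: "real \<Rightarrow> real"
  assumes r_mono: "strict_mono_on {0..} r"
    and a: "0 < a" "a \<le> g"
    and h_le: "\<And>t. a \<le> t \<Longrightarrow> h t \<le> r 0"
  defines "u \<equiv> \<lambda>t. if a \<le> t then h t else r t"
  shows "bdd_above (u ` {0..g})" and "\<forall>t\<in>{0..g}. u t < Sup (u ` {0..g})"
proof -
  have r_le: "r s \<le> r t" if "0 \<le> s" "s \<le> t" for s t
    using strict_mono_on_leD[OF r_mono] that by simp
  have "u t \<le> r a" if "0 \<le> t" for t
    using h_le[of t] r_le[of 0 a] r_le[of t a] a that by (auto simp: u_def)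
  then show bdd: "bdd_above (u ` {0..g})"
    by (intro bdd_aboveI[of _ "r a"]) auto
  have below_Sup: "u s \<le> Sup (u ` {0..g})" if "s \<in> {0..g}" for s
    using bdd that by (intro cSup_upper) auto
  have "\<exists>s\<in>{0..g}. u t < u s" if t: "t \<in> {0..g}" for t
  proof (cases "a \<le> t")
    case True
    have "r 0 < r (a / 2)"
      using a by (intro strict_mono_onD[OF r_mono]) auto
    then show ?thesis
      using True h_le[of t] a by (intro bexI[of _ "a / 2"]) (auto simp: u_def)
  next
    case False
    have "r t < r ((t + a) / 2)"
      using False t by (intro strict_mono_onD[OF r_mono]) auto
    then show ?thesis
      using False t a by (intro bexI[of _ "(t + a) / 2"]) (auto simp: u_def)
  qed
  then show "\<forall>t\<in>{0..g}. u t < Sup (u ` {0..g})"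
    using below_Sup less_le_trans by blast
qed

lemma feasible_strategy_one_project_image:
  "(\<lambda>y. y 1) ` {y. feasible_strategy 1 g y} = {0..g}"
proof (intro equalityI subsetI)
  fix t :: real
  assume "t \<in> {0..g}"
  then show "t \<in> (\<lambda>y. y 1) ` {y. feasible_strategy 1 g y}"
    by (intro image_eqI[of _ _ "\<lambda>_. t"]) (auto simp: feasible_strategy_def)
qed (auto simp: feasible_strategy_def)

lemma agent_utility_one_project_two_agents:
  "agent_utility R (\<lambda>_. 1) (\<lambda>_. 2) (\<lambda>_ _. 0) 2 1 ((\<lambda>_ _. 1)(1 := y)) 1 =
     (if 1 \<le> y 1 then - y 1 else R 1 1 (y 1) (1 + y 1))"
  by (simp add: agent_utility_def total_contrib_def numeral_2_eq_2 add.commute)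

lemma one_project_no_best_response:
  assumes r_mono: "strict_mono_on {0..} (\<lambda>t. R 1 1 t (1 + t))"
    and r_nonneg: "0 \<le> R 1 1 0 1"
  shows "let S = {y. feasible_strategy 1 2 y};
      U = (\<lambda>y. agent_utility R (\<lambda>_. 1) (\<lambda>_. 2) (\<lambda>_ _. 0) 2 1 ((\<lambda>_ _. 1)(1 := y)) 1)
    in bdd_above (U ` S) \<and> (\<forall>y\<in>S. U y < Sup (U ` S))"
proof -
  define u where "u t = (if 1 \<le> t then - t else R 1 1 t (1 + t))" for t
  have u_bdd: "bdd_above (u ` {0..2})"
    and u_below_Sup: "\<forall>t\<in>{0..2}. u t < Sup (u ` {0..2})"
    using threshold_utility_sup_not_attained[OF r_mono, of 1 2 uminus] r_nonneg
    by (auto simp: u_def)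
  let ?S = "{y. feasible_strategy 1 2 y}"
  let ?U = "\<lambda>y. agent_utility R (\<lambda>_. 1) (\<lambda>_. 2) (\<lambda>_ _. 0) 2 1 ((\<lambda>_ _. 1)(1 := y)) 1"
  have U_eq: "?U = u \<circ> (\<lambda>y. y 1)"
    unfolding u_def comp_def agent_utility_one_project_two_agents ..
  have proj: "(\<lambda>y. y 1) ` ?S = {0..2}"
    by (rule feasible_strategy_one_project_image)
  then have "?U ` ?S = u ` {0..2}"
    by (simp only: U_eq image_comp[symmetric])
  moreover have "?U y < Sup (u ` {0..2})" if "y \<in> ?S" for y
  proof -
    have "y 1 \<in> {0..2}"
      using proj that by blast
    moreover have "?U y = u (y 1)"
      unfolding u_def agent_utility_one_project_two_agents ..
    ultimately show ?thesis
      using u_below_Sup by metis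
  qed
  ultimately show ?thesis
    using u_bdd unfolding Let_def by simp
qed

theorem theorem5:
  fixes R :: refund_schemes
  assumes "refund_scheme R"
    and "contribution_monotone R"
  shows "\<exists>(n::nat) (p::nat) (T::nat \<Rightarrow> real) (B::nat \<Rightarrow> real) (\<gamma>::nat \<Rightarrow> real)
           (\<theta>::nat \<Rightarrow> nat \<Rightarrow> real) (i'::nat) (x::nat \<Rightarrow> nat \<Rightarrow> real).
     1 \<le> n \<and> 1 \<le> p \<and> i' \<in> {1..n} \<and>
     (\<forall>j\<in>{1..p}. 0 < T j \<and> 0 < B j) \<and>
     (\<forall>i\<in>{1..n}. 0 \<le> \<gamma> i) \<and>
     (\<forall>i\<in>{1..n}. \<forall>j\<in>{1..p}. 0 \<le> \<theta> i j) \<and>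
     (\<forall>i\<in>{1..n} - {i'}. feasible_strategy p (\<gamma> i) (x i)) \<and>
     (let S = {y. feasible_strategy p (\<gamma> i') y};
          U = (\<lambda>y. agent_utility R B T \<theta> n p (x(i' := y)) i')
      in bdd_above (U ` S) \<and> (\<forall>y\<in>S. U y < Sup (U ` S)))"
proof -
  have "strict_mono_on {0..} (\<lambda>t. R 1 1 t (1 + t))"
    using assms(2) by (simp add: contribution_monotone_def)
  moreover have "0 \<le> R 1 1 0 1"
    using assms(1) by (simp add: refund_scheme_def)
  ultimately have no_best_response: "let S = {y. feasible_strategy 1 2 y};
      U = (\<lambda>y. agent_utility R (\<lambda>_. 1) (\<lambda>_. 2) (\<lambda>_ _. 0) 2 1 ((\<lambda>_ _. 1)(1 := y)) 1)
    in bdd_above (U ` S) \<and> (\<forall>y\<in>S. U y < Sup (U ` S))"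
    by (rule one_project_no_best_response)
  show ?thesis
    apply (rule exI[of _ 2], rule exI[of _ 1], rule exI[of _ "\<lambda>_. 2"], rule exI[of _ "\<lambda>_. 1"],
        rule exI[of _ "\<lambda>_. 2"], rule exI[of _ "\<lambda>_ _. 0"], rule exI[of _ 1],
        rule exI[of _ "\<lambda>_ _. 1"])
    by (intro conjI no_best_response) (auto simp: feasible_strategy_def)
qed

end
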